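(* Let $\varpi:\mathbb R\to\mathbb R$ be such that $e^{i\varpi}$ is continuous and $1$-periodic, let $K\in\mathbb Z$ and $\alpha\in\mathbb R$. Let $C_{per}$ be the space of continuous $1$-periodic functions with the uniform norm, and define $\lambda_{\alpha,K}:C_{per}\to C_{per}$ by $(\lambda_{\alpha,K}\Phi)(x)=\tilde\Phi_\alpha(x)e^{-2Ki\varpi(x)}$, where $Q_\alpha(x)=\int_0^x\Phi(t)e^{i\alpha t}dt$ and $\tilde\Phi_\alpha(x)=-iQ_\alpha(x)e^{-i\alpha x}(1-e^{i\alpha})+iQ_\alpha(1)e^{-i\alpha x}$. Then the operator norm satisfies $\|\lambda_{\alpha,K}\|\le2$.
   Context: In the paper $\varpi(x)=\mathrm{Arg}\,p(x)$, where $p(x)e^{ikx}$ is a Floquet solution of a periodic Schrödinger equation. *)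

theory Defs
  imports "HOL-Analysis.Analysis"
begin

definition C_per :: "(real \<Rightarrow> complex) set" where
  "C_per = {f. continuous_on UNIV f \<and> (\<forall>x. f (x + 1) = f x)}"

definition unif_norm :: "(real \<Rightarrow> complex) \<Rightarrow> real" where
  "unif_norm f = (SUP x. cmod (f x))"

definition oint :: "real \<Rightarrow> (real \<Rightarrow> complex) \<Rightarrow> complex" where
  "oint x g = (if 0 \<le> x then integral {0..x} g else - integral {x..0} g)"

definition Q_alpha :: "real \<Rightarrow> (real \<Rightarrow> complex) \<Rightarrow> real \<Rightarrow> complex" where
  "Q_alpha \<alpha> \<Phi> x = oint x (\<lambda>t. \<Phi> t * exp (\<i> * complex_of_real (\<alpha> * t)))"

definition Phi_tilde :: "real \<Rightarrow> (real \<Rightarrow> complex) \<Rightarrow> real \<Rightarrow> complex" where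
  "Phi_tilde \<alpha> \<Phi> x =
     - \<i> * Q_alpha \<alpha> \<Phi> x * exp (- \<i> * complex_of_real (\<alpha> * x)) * (1 - exp (\<i> * complex_of_real \<alpha>))
     + \<i> * Q_alpha \<alpha> \<Phi> 1 * exp (- \<i> * complex_of_real (\<alpha> * x))"

definition lambda_op :: "(real \<Rightarrow> real) \<Rightarrow> real \<Rightarrow> int \<Rightarrow> (real \<Rightarrow> complex) \<Rightarrow> real \<Rightarrow> complex" where
  "lambda_op w \<alpha> K \<Phi> x =
     Phi_tilde \<alpha> \<Phi> x * exp (- 2 * of_int K * \<i> * complex_of_real (w x))"

end

theory Submission
  imports Defs
begin

text \<open>
  Put \<open>g(t) = \<Phi>(t) e^(i\<alpha>t)\<close>. For \<open>0 \<le> x \<le> 1\<close>, splitting \<open>Q\<^sub>\<alpha>(1) = Q\<^sub>\<alpha>(x) + \<integral>\<^sub>x\<^sup>1 g\<close>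
  gives \<open>Phi_tilde(x) = i e^(-i\<alpha>x) (\<integral>\<^sub>x\<^sup>1 g + e^(i\<alpha>) \<integral>\<^sub>0\<^sup>x g)\<close>, whose modulus is at most
  \<open>(1 - x) \<parallel>\<Phi>\<parallel> + x \<parallel>\<Phi>\<parallel> = \<parallel>\<Phi>\<parallel>\<close>. Since \<open>Q\<^sub>\<alpha>(x + 1) = Q\<^sub>\<alpha>(1) + e^(i\<alpha>) Q\<^sub>\<alpha>(x)\<close>, the
  function \<open>Phi_tilde\<close> is 1-periodic, so the bound holds on all of \<open>\<real>\<close>, and the factor
  \<open>e^(-2Ki\<varpi>)\<close> has modulus 1.
\<close>

lemma oint_eq_integral_diff:
  fixes g :: "real \<Rightarrow> complex"
  assumes g: "continuous_on UNIV g" and a: "a \<le> 0" "a \<le> u"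
  shows "oint u g = integral {a..u} g - integral {a..0} g"
proof (cases "0 \<le> u")
  case True
  have "integral {a..0} g + integral {0..u} g = integral {a..u} g"
    by (rule Henstock_Kurzweil_Integration.integral_combine)
       (use a True g in \<open>auto intro: integrable_continuous_real continuous_on_subset\<close>)
  then show ?thesis using True unfolding oint_def by (simp add: algebra_simps)
next
  case False
  have "integral {a..u} g + integral {u..0} g = integral {a..0} g"
    by (rule Henstock_Kurzweil_Integration.integral_combine)
       (use a False g in \<open>auto intro: integrable_continuous_real continuous_on_subset\<close>)
  then show ?thesis using False unfolding oint_def by (simp add: algebra_simps)
qed

lemma has_vector_derivative_oint:
  fixes g :: "real \<Rightarrow> complex"
  assumes g: "continuous_on UNIV g"
  shows "((\<lambda>u. oint u g) has_vector_derivative g x) (at x)"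
proof -
  define a where "a = min x 0 - 1"
  define b where "b = max x 0 + 1"
  have x: "x \<in> {a..b}" "x \<in> interior {a..b}" unfolding a_def b_def by auto
  have "((\<lambda>u. integral {a..u} g) has_vector_derivative g x) (at x within {a..b})"
    by (rule integral_has_vector_derivative) (use g x in \<open>auto intro: continuous_on_subset\<close>)
  then have "((\<lambda>u. integral {a..u} g - integral {a..0} g) has_vector_derivative g x)
               (at x within {a..b})"
    using has_vector_derivative_diff[OF _ has_vector_derivative_const] by fastforce
  then have "((\<lambda>u. oint u g) has_vector_derivative g x) (at x within {a..b})"
    by (rule has_vector_derivative_transform_within[OF _ zero_less_one x(1)])
       (use g in \<open>auto simp: a_def intro!: oint_eq_integral_diff[symmetric]\<close>)
  then show ?thesis using at_within_interior[OF x(2)] by simp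
qed

lemma oint_shift_one:
  fixes g :: "real \<Rightarrow> complex"
  assumes g: "continuous_on UNIV g" and shift: "\<And>t. g (t + 1) = c * g t"
  shows "oint (x + 1) g = oint 1 g + c * oint x g"
proof -
  define F where "F = (\<lambda>u. oint (u + 1) g - oint 1 g - c * oint u g)"
  have "(F has_vector_derivative 0) (at u)" for u
  proof -
    have "((\<lambda>u. oint u g) \<circ> (\<lambda>u. u + 1) has_vector_derivative 1 *\<^sub>R g (u + 1)) (at u)"
      by (rule vector_diff_chain_at[OF _ has_vector_derivative_oint[OF g]])
         (auto intro!: derivative_eq_intros)
    then have "(F has_vector_derivative g (u + 1) - 0 - c * g u) (at u)"
      unfolding F_def o_def
      by (intro has_vector_derivative_diff has_vector_derivative_const
          has_vector_derivative_mult_right has_vector_derivative_oint[OF g]) simp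
    then show ?thesis using shift by simp
  qed
  then obtain k where "\<And>x. F x = k"
    using has_derivative_zero_constant[of UNIV F]
    by (auto simp: has_vector_derivative_def intro: has_derivative_at_withinI)
  moreover have "F 0 = 0" unfolding F_def oint_def by simp
  ultimately have "F x = 0" by metis
  then show ?thesis unfolding F_def by (simp add: diff_eq_eq)
qed

lemma periodic_add_of_int:
  assumes "\<And>x. f (x + 1) = f (x :: real)"
  shows "f (y + of_int n) = f y"
proof (induction n rule: int_induct[where k = 0])
  case (step1 i)
  then show ?case using assms[of "y + of_int i"] by (simp add: add.assoc)
next
  case (step2 i)
  then show ?case using assms[of "y + of_int (i - 1)"] by (simp add: add.assoc)
qed simp

lemma periodic_eq_frac:
  assumes "\<And>x. f (x + 1) = f (x :: real)"
  shows "f x = f (frac x)"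
  using periodic_add_of_int[of f "frac x" "\<lfloor>x\<rfloor>", OF assms] by (simp add: frac_def)

lemma frac_in_unit_interval: "frac (x :: real) \<in> {0..1}"
  using frac_lt_1[of x] by simp

lemma Q_alpha_shift_one:
  assumes "continuous_on UNIV \<Phi>" and "\<And>x. \<Phi> (x + 1) = \<Phi> x"
  shows "Q_alpha \<alpha> \<Phi> (x + 1) = Q_alpha \<alpha> \<Phi> 1 + exp (\<i> * \<alpha>) * Q_alpha \<alpha> \<Phi> x"
  unfolding Q_alpha_def
  by (rule oint_shift_one)
     (use assms in \<open>auto intro!: continuous_intros simp: distrib_left exp_add algebra_simps\<close>)

lemma Phi_tilde_periodic:
  assumes "continuous_on UNIV \<Phi>" and "\<And>x. \<Phi> (x + 1) = \<Phi> x"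
  shows "Phi_tilde \<alpha> \<Phi> (x + 1) = Phi_tilde \<alpha> \<Phi> x"
proof -
  define E where "E = exp (\<i> * complex_of_real \<alpha>)"
  define e where "e = exp (- \<i> * complex_of_real (\<alpha> * x))"
  have e_shift: "exp (- \<i> * complex_of_real (\<alpha> * (x + 1))) = e * inverse E"
    unfolding e_def E_def by (simp add: distrib_left exp_add[symmetric] exp_minus[symmetric] algebra_simps)
  have "E \<noteq> 0" unfolding E_def by simp
  then show ?thesis
    unfolding Phi_tilde_def Q_alpha_shift_one[OF assms] e_shift
    unfolding E_def[symmetric] e_def[symmetric]
    by (simp add: field_simps)
qed

lemma norm_Phi_tilde_le:
  assumes \<Phi>: "continuous_on UNIV \<Phi>" and M: "\<And>t. cmod (\<Phi> t) \<le> M"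
    and x: "0 \<le> x" "x \<le> 1"
  shows "cmod (Phi_tilde \<alpha> \<Phi> x) \<le> M"
proof -
  define g where "g = (\<lambda>t. \<Phi> t * exp (\<i> * complex_of_real (\<alpha> * t)))"
  define E where "E = exp (\<i> * complex_of_real \<alpha>)"
  define e where "e = exp (- \<i> * complex_of_real (\<alpha> * x))"
  have g: "continuous_on {a..b} g" for a b
    unfolding g_def by (intro continuous_intros continuous_on_subset[OF \<Phi>]) simp
  have gM: "cmod (g t) \<le> M" for t unfolding g_def using M[of t] by (simp add: norm_mult)
  have split: "integral {0..x} g + integral {x..1} g = integral {0..1} g"
    by (rule Henstock_Kurzweil_Integration.integral_combine)
       (use x g in \<open>auto intro: integrable_continuous_real\<close>)
  have Q: "Q_alpha \<alpha> \<Phi> x = integral {0..x} g" "Q_alpha \<alpha> \<Phi> 1 = integral {0..1} g"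
    unfolding Q_alpha_def oint_def g_def using x by auto
  have "Phi_tilde \<alpha> \<Phi> x = \<i> * e * (integral {x..1} g + E * integral {0..x} g)"
    unfolding Phi_tilde_def Q split[symmetric] e_def[symmetric] E_def[symmetric]
    by (simp add: algebra_simps)
  moreover have "cmod e = 1" "cmod E = 1" unfolding e_def E_def by (simp_all add: norm_exp_eq_Re)
  ultimately have "cmod (Phi_tilde \<alpha> \<Phi> x) \<le> cmod (integral {x..1} g) + cmod (integral {0..x} g)"
    using norm_triangle_ineq[of "integral {x..1} g" "E * integral {0..x} g"]
    by (simp add: norm_mult)
  also have "\<dots> \<le> M * (1 - x) + M * (x - 0)"
    by (intro add_mono integral_bound g gM) (use x in auto)
  finally show ?thesis by (simp add: algebra_simps)
qed

lemma norm_le_unif_norm_periodic: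
  assumes "continuous_on UNIV \<Phi>" and "\<And>x. \<Phi> (x + 1) = \<Phi> x"
  shows "cmod (\<Phi> t) \<le> unif_norm \<Phi>"
proof -
  have "compact (\<Phi> ` {0..1})"
    by (rule compact_continuous_image) (use assms(1) in \<open>auto intro: continuous_on_subset\<close>)
  then obtain B where B: "\<And>y. y \<in> \<Phi> ` {0..1} \<Longrightarrow> cmod y \<le> B"
    using compact_imp_bounded bounded_iff by metis
  have "cmod (\<Phi> x) \<le> B" for x
    using B[OF imageI[OF frac_in_unit_interval]] periodic_eq_frac[of \<Phi>, OF assms(2)] by metis
  then have "bdd_above (range (\<lambda>x. cmod (\<Phi> x)))" by (rule bdd_aboveI2)
  then show ?thesis unfolding unif_norm_def by (rule cSUP_upper[rotated]) simp
qed

lemma unif_norm_lambda_op_le: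
  assumes "\<Phi> \<in> C_per"
  shows "unif_norm (lambda_op w \<alpha> K \<Phi>) \<le> unif_norm \<Phi>"
  unfolding unif_norm_def[of "lambda_op w \<alpha> K \<Phi>"]
proof (rule cSUP_least)
  fix x
  have \<Phi>: "continuous_on UNIV \<Phi>" "\<And>x. \<Phi> (x + 1) = \<Phi> x"
    using assms unfolding C_per_def by auto
  have "cmod (lambda_op w \<alpha> K \<Phi> x) = cmod (Phi_tilde \<alpha> \<Phi> x)"
    unfolding lambda_op_def by (simp add: norm_mult norm_exp_eq_Re)
  also have "\<dots> = cmod (Phi_tilde \<alpha> \<Phi> (frac x))"
    using periodic_eq_frac[of "Phi_tilde \<alpha> \<Phi>", OF Phi_tilde_periodic[OF \<Phi>]] by metis
  also have "\<dots> \<le> unif_norm \<Phi>"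
    using norm_Phi_tilde_le[OF \<Phi>(1) norm_le_unif_norm_periodic[OF \<Phi>]] frac_in_unit_interval
    by auto
  finally show "cmod (lambda_op w \<alpha> K \<Phi> x) \<le> unif_norm \<Phi>" .
qed simp

theorem lemma2p4:
  fixes w :: "real \<Rightarrow> real" and K :: int and \<alpha> :: real
  assumes "continuous_on UNIV (\<lambda>x. exp (\<i> * complex_of_real (w x)))"
    and "\<forall>x. exp (\<i> * complex_of_real (w (x + 1))) = exp (\<i> * complex_of_real (w x))"
  shows "\<forall>\<Phi> \<in> C_per. unif_norm (lambda_op w \<alpha> K \<Phi>) \<le> 2 * unif_norm \<Phi>"
proof
  fix \<Phi> assume \<Phi>: "\<Phi> \<in> C_per"
  then have "cmod (\<Phi> 0) \<le> unif_norm \<Phi>"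
    by (intro norm_le_unif_norm_periodic) (auto simp: C_per_def)
  then have "0 \<le> unif_norm \<Phi>"
    using norm_ge_zero order_trans by blast
  then show "unif_norm (lambda_op w \<alpha> K \<Phi>) \<le> 2 * unif_norm \<Phi>"
    using unif_norm_lambda_op_le[of \<Phi> w \<alpha> K, OF \<Phi>] by linarith
qed

end
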